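(* Let $r\ge 2$, let $\lambda,\mu\in\Lambda$ with $\lambda\sim_e\mu$, and let $s\in\mathbb{Z}$. Then $\eta(\lambda,s)\approx_r\eta(\mu,s)$ (in $\mathcal{A}_r^e$) if and only if $\Phi_r(\lambda,s)\approx_e\Phi_r(\mu,s)$ (in $\mathcal{A}_e^r$).
   Context: Fix an integer $e\ge 2$. A partition is a weakly decreasing sequence $\lambda=(\lambda_1,\lambda_2,\dots)$ of non-negative integers with finite sum $|\lambda|$; $\Lambda$ denotes the set of partitions and $\Lambda^{(m)}$ the set of $m$-multipartitions, i.e. $m$-tuples $\boldsymbol\lambda=(\lambda^{(1)},\dots,\lambda^{(m)})$ of partitions, with $|\boldsymbol\lambda|=\sum_k|\lambda^{(k)}|$. A $\beta$-set is a subset $B\subseteq\mathbb{Z}$ containing all sufficiently small integers and no sufficiently large ones. For $\lambda\in\Lambda$ and $s\in\mathbb{Z}$ set $B_s(\lambda)=\{\lambda_i-i+s : i\ge 1\}$; every $\beta$-set equals $B_s(\lambda)$ for a unique pair $(\lambda,s)$. For $N\ge 2$ let $\mathcal{A}_N=\Lambda\times\mathbb{Z}$ (abacus configurations with $N$ runners) and $\mathcal{A}_N^m=\Lambda^{(m)}\times\mathbb{Z}^m$, where $(\boldsymbol\lambda,\mathbf{s})$ is identified with the $m$-tuple of $\beta$-sets $(B_{s_1}(\lambda^{(1)}),\dots,B_{s_m}(\lambda^{(m)}))$. Blocks: for $(\boldsymbol\lambda,\mathbf{s})\in\mathcal{A}_N^m$, its $N$-residue multiset is the multiset of the values $s_k+y-x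 \bmod N$ over all nodes $(x,y,k)$ with $x\ge1$, $1\le y\le\lambda^{(k)}_x$, $1\le k\le m$. Define $(\boldsymbol\lambda,\mathbf{s})\approx_N(\boldsymbol\mu,\mathbf{s}')$ iff $\mathbf{s}=\mathbf{s}'$, $|\boldsymbol\lambda|=|\boldsymbol\mu|$ and the $N$-residue multisets coincide. Its equivalence classes are called blocks. The map $\eta$: for $(\lambda,s)\in\mathcal{A}_e$ with $B=B_s(\lambda)$ and $0\le i<e$, the set $C_i=\{(b-i)/e : b\in B,\ b\equiv i \bmod e\}$ is a $\beta$-set, so $C_i=B_{t_i}(\rho_i)$ for a unique $(\rho_i,t_i)\in\Lambda\times\mathbb{Z}$; set $\eta(\lambda,s)=((\rho_0,\dots,\rho_{e-1}),(t_0,\dots,t_{e-1}))\in\Lambda^{(e)}\times\mathbb{Z}^e$, which we also regard as an element of $\mathcal{A}_r^e$. The $e$-weight of $\lambda$ is $\mathrm{wt}(\lambda)=\sum_i|\rho_i|$. For $\lambda,\mu\in\Lambda$ write $\lambda\sim_e\mu$ if $(\lambda,s)\approx_e(\mu,s)$ for some (equivalently any) $s\in\mathbb{Z}$. Uglov's map: for $1\le k\le r$ define $\psi_k:\mathbb{Z}\to\mathbb{Z}$ by $\psi_k(ae+i)=((a+1)r-k)e+i$ for $a\in\mathbb{Z}$, $0\le i<e$. For $(\boldsymbol\lambda,\mathbf{s})\in\mathcal{A}_e^r$ the set $B=\bigsqcup_{k=1}^r\psi_k(B_{s_k}(\lambda^{(k)}))$ is a $\beta$-set, and $\Psi_r(\boldsymbol\lambda,\mathbf{s})$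 is the unique $(\tilde\lambda,\tilde s)\in\mathcal{A}_e$ with $B_{\tilde s}(\tilde\lambda)=B$. $\Psi_r:\mathcal{A}_e^r\to\mathcal{A}_e$ is a bijection; $\Phi_r=\Psi_r^{-1}$. *)

theory Defs
  imports Main "HOL-Library.Multiset"
begin

text \<open>A partition is represented as a function l :: nat => nat with l i = lambda_(i+1),
  weakly decreasing with finite support.\<close>
definition is_partition :: "(nat \<Rightarrow> nat) \<Rightarrow> bool" where
  "is_partition l \<longleftrightarrow> (\<forall>i. l (Suc i) \<le> l i) \<and> finite {i. l i \<noteq> 0}"

definition psize :: "(nat \<Rightarrow> nat) \<Rightarrow> nat" where
  "psize l = (\<Sum>i\<in>{i. l i \<noteq> 0}. l i)"

definition is_betaset :: "int set \<Rightarrow> bool" where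
  "is_betaset B \<longleftrightarrow> (\<exists>a. \<forall>x\<le>a. x \<in> B) \<and> (\<exists>b. \<forall>x\<ge>b. x \<notin> B)"

definition beta :: "int \<Rightarrow> (nat \<Rightarrow> nat) \<Rightarrow> int set" where
  "beta s l = {int (l i) - int (i + 1) + s | i. True}"

definition decode :: "int set \<Rightarrow> (nat \<Rightarrow> nat) \<times> int" where
  "decode B = (THE (l, t). is_partition l \<and> beta t l = B)"

text \<open>Abacus configurations with m runners are pairs (L, S) :: (nat => nat => nat) \<times> (nat => int);
  only components 0..<m are relevant (component k stands for the paper's component k+1).\<close>
type_synonym multiconf = "(nat \<Rightarrow> nat \<Rightarrow> nat) \<times> (nat \<Rightarrow> int)"

text \<open>Nodes (x,y) of lambda with x >= 1, 1 <= y <= lambda_x; here encoded as (i, y) with x = i+1.\<close>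
definition nodes :: "(nat \<Rightarrow> nat) \<Rightarrow> (nat \<times> nat) set" where
  "nodes l = {(i, y). 1 \<le> y \<and> y \<le> l i}"

definition residues :: "nat \<Rightarrow> nat \<Rightarrow> multiconf \<Rightarrow> int multiset" where
  "residues N m X = (\<Sum>k<m. image_mset (\<lambda>(i, y). (snd X k + int y - int (i + 1)) mod int N)
                                 (mset_set (nodes (fst X k))))"

definition block_eq :: "nat \<Rightarrow> nat \<Rightarrow> multiconf \<Rightarrow> multiconf \<Rightarrow> bool" where
  "block_eq N m X Y \<longleftrightarrow> (\<forall>k<m. snd X k = snd Y k)
      \<and> (\<Sum>k<m. psize (fst X k)) = (\<Sum>k<m. psize (fst Y k))
      \<and> residues N m X = residues N m Y"

definition sim_e :: "nat \<Rightarrow> (nat \<Rightarrow> nat) \<Rightarrow> (nat \<Rightarrow> nat) \<Rightarrow> bool" where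
  "sim_e e l m \<longleftrightarrow> (\<exists>s. block_eq e 1 (\<lambda>_. l, \<lambda>_. s) (\<lambda>_. m, \<lambda>_. s))"

definition eta_C :: "nat \<Rightarrow> int set \<Rightarrow> nat \<Rightarrow> int set" where
  "eta_C e B i = {(b - int i) div int e | b. b \<in> B \<and> b mod int e = int i}"

definition eta :: "nat \<Rightarrow> (nat \<Rightarrow> nat) \<times> int \<Rightarrow> multiconf" where
  "eta e ls = (\<lambda>i. if i < e then fst (decode (eta_C e (beta (snd ls) (fst ls)) i)) else (\<lambda>_. 0),
               \<lambda>i. if i < e then snd (decode (eta_C e (beta (snd ls) (fst ls)) i)) else 0)"

definition psi :: "nat \<Rightarrow> nat \<Rightarrow> nat \<Rightarrow> int \<Rightarrow> int" where
  "psi e r k x = ((x div int e + 1) * int r - int k) * int e + x mod int e"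

definition Psi :: "nat \<Rightarrow> nat \<Rightarrow> multiconf \<Rightarrow> (nat \<Rightarrow> nat) \<times> int" where
  "Psi e r X = decode (\<Union>k\<in>{1..r}. psi e r k ` beta (snd X (k - 1)) (fst X (k - 1)))"

definition Phi :: "nat \<Rightarrow> nat \<Rightarrow> (nat \<Rightarrow> nat) \<times> int \<Rightarrow> multiconf" where
  "Phi e r ls = (THE X. (\<forall>k<r. is_partition (fst X k))
                      \<and> (\<forall>k\<ge>r. fst X k = (\<lambda>_. 0) \<and> snd X k = 0)
                      \<and> Psi e r X = ls)"

end

theory Submission
  imports Defs
begin

text \<open>
  All data entering the block conditions are sums over the beads of a beta-set, taken relative
  to a second beta-set (see \<open>relsum\<close>). Counting the nodes of residue \<open>j\<close> row by row telescopes
  to the relative sum of \<open>\<lfloor>(b - j)/N\<rfloor>\<close>, so configurations with equal charges lie in one block iff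
  the relative sums of \<open>b\<close> and of all \<open>\<lfloor>(b - j)/N\<rfloor>\<close> vanish. Both \<open>\<eta>\<close> and \<open>\<Phi>\<^sub>r\<close> only
  redistribute the beads of \<open>B\<^sub>s(\<lambda>)\<close> over several runners by a bijection
  \<open>\<int> \<rightarrow> runners \<times> \<int>\<close>, so each side of the equivalence becomes a list of balance conditions
  between \<open>B\<^sub>s(\<lambda>)\<close> and \<open>B\<^sub>s(\<mu>)\<close> for explicit functions of the bead \<open>b\<close>. Granted the balances
  coming from \<open>\<lambda> \<sim>\<^sub>e \<mu>\<close>, floor arithmetic reduces both lists to the vanishing of all relative
  sums of \<open>\<lfloor>(\<lfloor>b/e\<rfloor> - j)/r\<rfloor>\<close>.
\<close>

section \<open>Beta-sets of partitions\<close>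

definition beta_seq :: "int \<Rightarrow> (nat \<Rightarrow> nat) \<Rightarrow> nat \<Rightarrow> int" where
  "beta_seq t l i = int (l i) - int (i + 1) + t"

lemma beta_eq_range: "beta t l = range (beta_seq t l)"
  unfolding beta_def beta_seq_def by auto

lemma partition_antimono:
  assumes "is_partition l" "i \<le> j"
  shows "l j \<le> l i"
proof -
  have "\<And>i. l (Suc i) \<le> l i" using assms(1) unfolding is_partition_def by auto
  then show ?thesis using assms(2) by (metis lift_Suc_antimono_le)
qed

lemma partition_eventually_zero:
  assumes "is_partition l"
  obtains n where "\<forall>i\<ge>n. l i = 0"
proof -
  have "finite {i. l i \<noteq> 0}" using assms unfolding is_partition_def by auto
  then obtain n where "\<forall>i\<in>{i. l i \<noteq> 0}. i < n" using finite_nat_set_iff_bounded by blast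
  then have "\<forall>i\<ge>n. l i = 0" by (meson leD mem_Collect_eq)
  then show ?thesis by (rule that)
qed

lemma beta_seq_strict_decreasing:
  "is_partition l \<Longrightarrow> i < j \<Longrightarrow> beta_seq t l j < beta_seq t l i"
  using partition_antimono[of l i j] unfolding beta_seq_def by auto

lemma inj_beta_seq: "is_partition l \<Longrightarrow> inj (beta_seq t l)"
  by (metis beta_seq_strict_decreasing injI linorder_neqE_nat order_less_irrefl)

lemma beta_split:
  assumes "is_partition l" "\<forall>i\<ge>n. l i = 0" "z \<le> t - int n"
  shows "beta t l = beta_seq t l ` {..<nat (t - z)} \<union> {x. x < z}"
    and "beta_seq t l ` {..<nat (t - z)} \<inter> {x. x < z} = {}"
proof -
  have "z \<le> beta_seq t l i" if "i < nat (t - z)" for i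
    using that unfolding beta_seq_def by linarith
  then show "beta_seq t l ` {..<nat (t - z)} \<inter> {x. x < z} = {}" by force
  have tail: "beta_seq t l i = t - int i - 1" if "nat (t - z) \<le> i" for i
    using that assms unfolding beta_seq_def by auto
  have "x \<in> beta t l" if "x < z" for x
  proof -
    have "beta_seq t l (nat (t - 1 - x)) = x"
      using tail[of "nat (t - 1 - x)"] that assms(3) by simp
    then show ?thesis unfolding beta_eq_range by (metis rangeI)
  qed
  moreover have "beta_seq t l i \<in> beta_seq t l ` {..<nat (t - z)} \<union> {x. x < z}" for i
    by (cases "i < nat (t - z)") (use tail[of i] in auto)
  ultimately show "beta t l = beta_seq t l ` {..<nat (t - z)} \<union> {x. x < z}"
    by (auto simp: beta_eq_range)
qed

lemma is_betaset_beta: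
  assumes "is_partition l"
  shows "is_betaset (beta t l)"
proof -
  obtain n where n: "\<forall>i\<ge>n. l i = 0" using partition_eventually_zero[OF assms] .
  have "\<forall>x\<le>t - int n - 1. x \<in> beta t l"
    using beta_split(1)[OF assms n, of "t - int n"] by auto
  moreover have "beta_seq t l i < t + int (l 0)" for i
    using partition_antimono[OF assms, of 0 i] unfolding beta_seq_def by simp
  then have "\<forall>x\<ge>t + int (l 0). x \<notin> beta t l"
    by (auto simp: beta_eq_range) (metis not_le)
  ultimately show ?thesis unfolding is_betaset_def by blast
qed

lemma beta_shift: "beta t' l = (\<lambda>x. x + (t' - t)) ` beta t l"
  unfolding beta_eq_range beta_seq_def by (auto simp: image_image algebra_simps)

lemma strict_decreasing_diff:
  fixes b :: "nat \<Rightarrow> int"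
  assumes "\<forall>i. b (Suc i) < b i" "i \<le> j"
  shows "b j \<le> b i - int (j - i)"
proof -
  have "b (i + k) \<le> b i - int k" for k
  proof (induction k)
    case (Suc k)
    then show ?case using assms(1)[rule_format, of "i + k"] by simp
  qed simp
  from this[of "j - i"] assms(2) show ?thesis by simp
qed

lemma strict_decreasing_range_eq:
  fixes b b' :: "nat \<Rightarrow> int"
  assumes "\<forall>i. b (Suc i) < b i" "\<forall>i. b' (Suc i) < b' i" "range b = range b'"
  shows "b = b'"
proof -
  \<comment> \<open>a strictly decreasing sequence is the greedy enumeration of its range\<close>
  have greedy: "c 0 = (GREATEST x. x \<in> range c)
      \<and> (\<forall>i. c (Suc i) = (GREATEST x. x \<in> range c \<and> x < c i))"
    if c: "\<forall>i. c (Suc i) < c i" for c :: "nat \<Rightarrow> int"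
  proof (intro conjI allI)
    show "c 0 = (GREATEST x. x \<in> range c)"
    proof (rule Greatest_equality[symmetric])
      fix y assume "y \<in> range c"
      then obtain j where "y = c j" by auto
      then show "y \<le> c 0" using strict_decreasing_diff[OF c, of 0 j] by simp
    qed simp
    fix i
    show "c (Suc i) = (GREATEST x. x \<in> range c \<and> x < c i)"
    proof (rule Greatest_equality[symmetric])
      show "c (Suc i) \<in> range c \<and> c (Suc i) < c i" using c by auto
      fix y assume "y \<in> range c \<and> y < c i"
      then obtain j where j: "y = c j" "c j < c i" by auto
      then have "Suc i \<le> j" using strict_decreasing_diff[OF c, of j i] by (cases "j \<le> i") auto
      then show "y \<le> c (Suc i)" using strict_decreasing_diff[OF c, of "Suc i" j] j by simp
    qed
  qed
  have "b i = b' i" for i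
    by (induction i) (use greedy[OF assms(1)] greedy[OF assms(2)] assms(3) in simp_all)
  then show ?thesis by auto
qed

lemma beta_inject:
  assumes "is_partition l" "is_partition l'" "beta t l = beta t' l'"
  shows "l = l' \<and> t = t'"
proof -
  have eq: "beta_seq t l = beta_seq t' l'"
    using beta_seq_strict_decreasing[OF assms(1)] beta_seq_strict_decreasing[OF assms(2)] assms(3)
    by (intro strict_decreasing_range_eq) (auto simp: beta_eq_range)
  obtain n where n: "\<forall>i\<ge>n. l i = 0" using partition_eventually_zero[OF assms(1)] .
  obtain n' where n': "\<forall>i\<ge>n'. l' i = 0" using partition_eventually_zero[OF assms(2)] .
  have "t = t'"
    using fun_cong[OF eq, of "max n n'"] n n' unfolding beta_seq_def by simp
  moreover have "l i = l' i" for i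
    using fun_cong[OF eq, of i] \<open>t = t'\<close> unfolding beta_seq_def by simp
  ultimately show ?thesis by auto
qed

lemma decode_beta: "is_partition l \<Longrightarrow> decode (beta t l) = (l, t)"
  unfolding decode_def by (rule the_equality) (auto dest: beta_inject)

lemma GreatestI_int_bounded:
  fixes P :: "int \<Rightarrow> bool"
  assumes "P x0" "\<And>x. P x \<Longrightarrow> x \<le> M"
  shows "P (GREATEST x. P x) \<and> (\<forall>y. P y \<longrightarrow> y \<le> (GREATEST x. P x))"
proof -
  define S where "S = {x. P x \<and> x0 \<le> x}"
  have fin: "finite S" unfolding S_def by (rule finite_subset[of _ "{x0..M}"]) (use assms in auto)
  have "x0 \<in> S" unfolding S_def using assms by auto
  then have MS: "Max S \<in> S" using fin Max_in by blast
  have Mmax: "\<forall>y. P y \<longrightarrow> y \<le> Max S"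
  proof (intro allI impI)
    fix y assume "P y"
    then show "y \<le> Max S" using fin MS by (cases "x0 \<le> y") (auto simp: S_def)
  qed
  have "(GREATEST x. P x) = Max S" by (rule Greatest_equality) (use MS Mmax in \<open>auto simp: S_def\<close>)
  then show ?thesis using MS Mmax unfolding S_def by auto
qed

lemma betaset_strict_decreasing_enum:
  assumes "is_betaset B"
  obtains b :: "nat \<Rightarrow> int" where "\<forall>i. b (Suc i) < b i" "range b = B"
proof -
  obtain a where a: "\<forall>x\<le>a. x \<in> B" using assms unfolding is_betaset_def by blast
  obtain h where "\<forall>x\<ge>h. x \<notin> B" using assms unfolding is_betaset_def by blast
  then have hB: "x \<in> B \<Longrightarrow> x \<le> h" for x by (meson not_le order_less_imp_le)
  define b where "b = rec_nat (GREATEST x. x \<in> B) (\<lambda>i c. GREATEST x. x \<in> B \<and> x < c)"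
  have b0: "b 0 = (GREATEST x. x \<in> B)" and bS: "b (Suc i) = (GREATEST x. x \<in> B \<and> x < b i)" for i
    unfolding b_def by simp_all
  have G0: "b 0 \<in> B \<and> (\<forall>y. y \<in> B \<longrightarrow> y \<le> b 0)"
    unfolding b0 by (rule GreatestI_int_bounded[of _ a h]) (use a hB in auto)
  have GS: "(b (Suc i) \<in> B \<and> b (Suc i) < b i) \<and> (\<forall>y. y \<in> B \<and> y < b i \<longrightarrow> y \<le> b (Suc i))" for i
    unfolding bS by (rule GreatestI_int_bounded[of _ "min a (b i - 1)" "b i"]) (use a in auto)
  have strict: "\<forall>i. b (Suc i) < b i" using GS by auto
  \<comment> \<open>no element of \<open>B\<close> is skipped\<close>
  have cover: "\<forall>i. \<forall>x\<in>B. x \<le> b i \<and> b i - x \<le> int n \<longrightarrow> x \<in> range b" for n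
  proof (induction n)
    case (Suc n)
    show ?case
    proof (intro allI ballI impI)
      fix i x assume x: "x \<in> B" "x \<le> b i \<and> b i - x \<le> int (Suc n)"
      show "x \<in> range b"
      proof (cases "x = b i")
        case False
        then have "x \<le> b (Suc i)" "b (Suc i) < b i" using GS[of i] x by auto
        then have "b (Suc i) - x \<le> int n" using x by linarith
        then show ?thesis using Suc.IH x \<open>x \<le> b (Suc i)\<close> by blast
      qed simp
    qed
  qed auto
  have "B \<subseteq> range b"
  proof
    fix x assume "x \<in> B"
    then show "x \<in> range b" using cover[of "nat (b 0 - x)"] G0 by auto
  qed
  moreover have "b i \<in> B" for i by (cases i) (use G0 GS in auto)
  ultimately show ?thesis using that strict by blast
qed

lemma betaset_obtain_partition:
  assumes "is_betaset B"
  obtains l t where "is_partition l" "beta t l = B"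
proof -
  obtain b :: "nat \<Rightarrow> int" where strict: "\<forall>i. b (Suc i) < b i" and rng: "range b = B"
    using betaset_strict_decreasing_enum[OF assms] .
  obtain a where a: "\<forall>x\<le>a. x \<in> B" using assms unfolding is_betaset_def by blast
  define i0 where "i0 = nat (b 0 - a)"
  have bi0: "b i0 \<le> a"
    using strict_decreasing_diff[OF strict, of 0 i0] unfolding i0_def by (cases "a \<le> b 0") auto
  have tail: "b (i0 + k) = b i0 - int k" for k
  proof (induction k)
    case (Suc k)
    have "b (i0 + k) - 1 \<in> range b" using a Suc.IH bi0 rng by auto
    then obtain j where j: "b j = b (i0 + k) - 1" by auto
    then have "Suc (i0 + k) \<le> j"
      using strict_decreasing_diff[OF strict, of j "i0 + k"] by (cases "j \<le> i0 + k") auto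
    then have "b j \<le> b (Suc (i0 + k))" using strict_decreasing_diff[OF strict, of "Suc (i0 + k)" j] by simp
    then show ?case using Suc.IH strict[rule_format, of "i0 + k"] j by simp
  qed simp
  define t where "t = b i0 + int i0 + 1"
  define l where "l i = nat (b i + int i + 1 - t)" for i
  have nonneg: "0 \<le> b i + int i + 1 - t" for i
    using strict_decreasing_diff[OF strict, of i "max i i0"] tail[of "max i i0 - i0"]
    unfolding t_def by auto
  have "l i = 0" if "i0 \<le> i" for i
    using tail[of "i - i0"] that unfolding l_def t_def by simp
  then have "{i. l i \<noteq> 0} \<subseteq> {..<i0}" by (metis (mono_tags) lessThan_iff mem_Collect_eq not_le subsetI)
  moreover have "l (Suc i) \<le> l i" for i
    using strict[rule_format, of i] unfolding l_def by (intro nat_mono) simp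
  ultimately have "is_partition l" unfolding is_partition_def by (auto intro: finite_subset)
  moreover have "beta_seq t l = b" using nonneg unfolding beta_seq_def l_def by (auto intro!: ext)
  ultimately show ?thesis using that rng by (auto simp: beta_eq_range)
qed

lemma decode_betaset:
  assumes "is_betaset B"
  shows "is_partition (fst (decode B)) \<and> beta (snd (decode B)) (fst (decode B)) = B"
proof -
  obtain l t where "is_partition l" "beta t l = B" using betaset_obtain_partition[OF assms] .
  then show ?thesis using decode_beta by auto
qed

lemma strict_mono_int_diff:
  fixes q :: "int \<Rightarrow> int"
  assumes "strict_mono q" "x \<le> y"
  shows "y - x \<le> q y - q x"
proof -
  have "int k \<le> q (x + int k) - q x" for k
  proof (induction k)
    case (Suc k)
    have "q (x + int k) < q (x + int (Suc k))" using assms(1) by (rule strict_monoD) simp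
    then show ?case using Suc.IH by linarith
  qed simp
  then have "int (nat (y - x)) \<le> q (x + int (nat (y - x))) - q x" .
  then show ?thesis using assms(2) by simp
qed

lemma is_betaset_vimage:
  fixes q :: "int \<Rightarrow> int"
  assumes "is_betaset B" "strict_mono q"
  shows "is_betaset (q -` B)"
proof -
  obtain a where a: "\<forall>x\<le>a. x \<in> B" using assms(1) unfolding is_betaset_def by blast
  obtain h where h: "\<forall>x\<ge>h. x \<notin> B" using assms(1) unfolding is_betaset_def by blast
  have "\<forall>y\<le>min 0 (a - q 0). y \<in> q -` B"
  proof (intro allI impI)
    fix y assume "y \<le> min 0 (a - q 0)"
    then have "q y \<le> a" using strict_mono_int_diff[OF assms(2), of y 0] by linarith
    then show "y \<in> q -` B" using a by simp
  qed
  moreover have "\<forall>y\<ge>max 0 (h - q 0). y \<notin> q -` B"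
  proof (intro allI impI)
    fix y assume "max 0 (h - q 0) \<le> y"
    then have "h \<le> q y" using strict_mono_int_diff[OF assms(2), of 0 y] by linarith
    then show "y \<notin> q -` B" using h by simp
  qed
  ultimately show ?thesis unfolding is_betaset_def by blast
qed

section \<open>Relative sums\<close>

text \<open>\<open>relsum f A A'\<close> is the formal difference \<open>\<Sum>\<^sub>A f - \<Sum>\<^sub>A\<^sub>' f\<close>; it is a finite sum as
  soon as \<open>A\<close> and \<open>A'\<close> differ in finitely many elements, which is the case for any two beta-sets.\<close>
definition relsum :: "(int \<Rightarrow> int) \<Rightarrow> int set \<Rightarrow> int set \<Rightarrow> int" where
  "relsum f A A' = (\<Sum>x\<in>A - A'. f x) - (\<Sum>x\<in>A' - A. f x)"

lemma relsum_cong: "(\<And>x. f x = g x) \<Longrightarrow> relsum f A A' = relsum g A A'"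
  by (metis ext)

lemma relsum_add: "relsum (\<lambda>x. f x + g x) A A' = relsum f A A' + relsum g A A'"
  unfolding relsum_def by (simp add: sum.distrib)

lemma relsum_diff: "relsum (\<lambda>x. f x - g x) A A' = relsum f A A' - relsum g A A'"
  unfolding relsum_def by (simp add: sum_subtractf)

lemma relsum_cmult: "relsum (\<lambda>x. c * f x) A A' = c * relsum f A A'"
  unfolding relsum_def by (simp add: sum_distrib_left right_diff_distrib)

lemma relsum_const: "relsum (\<lambda>x. c) A A' = c * relsum (\<lambda>_. 1) A A'"
  using relsum_cmult[of c "\<lambda>_. 1"] by simp

lemma relsum_sum: "relsum (\<lambda>x. \<Sum>k\<in>K. f k x) A A' = (\<Sum>k\<in>K. relsum (f k) A A')"
  unfolding relsum_def by (simp add: sum.swap[of _ K] sum_subtractf)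

lemma relsum_translate:
  "relsum f ((\<lambda>x. x + c) ` A) ((\<lambda>x. x + c) ` A') = relsum (\<lambda>x. f (x + c)) A A'"
proof -
  have inj: "inj (\<lambda>x::int. x + c)" by (rule injI) simp
  then have "(\<lambda>x. x + c) ` A - (\<lambda>x. x + c) ` A' = (\<lambda>x. x + c) ` (A - A')" for A A' :: "int set"
    by (rule image_set_diff[symmetric])
  then show ?thesis unfolding relsum_def by (simp add: sum.reindex inj_on_subset[OF inj])
qed

lemma relsum_Un_disjoint:
  assumes "X \<inter> T = {}" "Y \<inter> T = {}" "finite X" "finite Y"
  shows "relsum f (X \<union> T) (Y \<union> T) = sum f X - sum f Y"
proof -
  have "(X \<union> T) - (Y \<union> T) = X - X \<inter> Y" "(Y \<union> T) - (X \<union> T) = Y - X \<inter> Y"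
    using assms by auto
  then show ?thesis unfolding relsum_def using assms by (simp add: sum_diff)
qed

lemma relsum_beta:
  assumes "is_partition l" "is_partition l'" "\<forall>i\<ge>n. l i = 0" "\<forall>i\<ge>n'. l' i = 0"
    and "z \<le> t - int n" "z \<le> t' - int n'"
  shows "relsum f (beta t l) (beta t' l')
    = (\<Sum>i<nat (t - z). f (beta_seq t l i)) - (\<Sum>i<nat (t' - z). f (beta_seq t' l' i))"
proof -
  note split = beta_split[OF assms(1,3,5)] and split' = beta_split[OF assms(2,4,6)]
  have "relsum f (beta t l) (beta t' l')
      = sum f (beta_seq t l ` {..<nat (t - z)}) - sum f (beta_seq t' l' ` {..<nat (t' - z)})"
    unfolding split(1) split'(1) using split(2) split'(2) by (rule relsum_Un_disjoint) auto
  then show ?thesis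
    using inj_beta_seq[OF assms(1)] inj_beta_seq[OF assms(2)]
    by (simp add: sum.reindex inj_on_subset[of _ UNIV])
qed

lemma finite_beta_diff:
  assumes "is_partition l" "is_partition l'"
  shows "finite (beta t l - beta t' l')"
proof -
  obtain n where n: "\<forall>i\<ge>n. l i = 0" using partition_eventually_zero[OF assms(1)] .
  obtain n' where n': "\<forall>i\<ge>n'. l' i = 0" using partition_eventually_zero[OF assms(2)] .
  define z where "z = min (t - int n) (t' - int n')"
  have "beta t l - beta t' l' \<subseteq> beta_seq t l ` {..<nat (t - z)}"
    using beta_split(1)[OF assms(1) n, of z] beta_split(1)[OF assms(2) n', of z] unfolding z_def by auto
  then show ?thesis by (rule finite_subset) simp
qed

lemma relsum_one_beta:
  assumes "is_partition l" "is_partition l'"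
  shows "relsum (\<lambda>_. 1) (beta t l) (beta t' l') = t - t'"
proof -
  obtain n where n: "\<forall>i\<ge>n. l i = 0" using partition_eventually_zero[OF assms(1)] .
  obtain n' where n': "\<forall>i\<ge>n'. l' i = 0" using partition_eventually_zero[OF assms(2)] .
  define z where "z = min (t - int n) (t' - int n')"
  show ?thesis using relsum_beta[OF assms n n', of z, where f = "\<lambda>_. 1"] unfolding z_def by auto
qed

lemma relsum_div_mod:
  fixes N :: int
  assumes "0 < N" "relsum (\<lambda>_. 1) A A' = 0"
  shows "relsum (\<lambda>x. (f x - j) div N) A A' = relsum (\<lambda>x. (f x - j mod N) div N) A A'"
proof -
  have "(f x - j) div N = (f x - j mod N) div N - j div N" for x
  proof -
    have "f x - j = (f x - j mod N) + (- (j div N)) * N"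
      using div_mult_mod_eq[of j N] by (simp add: algebra_simps)
    then have "(f x - j) div N = ((f x - j mod N) + (- (j div N)) * N) div N" by (rule arg_cong)
    also have "\<dots> = - (j div N) + (f x - j mod N) div N" by (rule div_mult_self1) (use assms in simp)
    finally show ?thesis by simp
  qed
  then have "relsum (\<lambda>x. (f x - j) div N) A A'
      = relsum (\<lambda>x. (f x - j mod N) div N - j div N) A A'"
    by (rule relsum_cong)
  also have "\<dots> = relsum (\<lambda>x. (f x - j mod N) div N) A A' - (j div N) * relsum (\<lambda>_. 1) A A'"
    by (simp only: relsum_diff relsum_const[of "j div N"])
  finally show ?thesis using assms(2) by simp
qed

section \<open>Blocks as balance conditions\<close>

lemma int_div_mult_add: "0 \<le> \<rho> \<Longrightarrow> \<rho> < N \<Longrightarrow> (N * q + \<rho>) div N = (q :: int)"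
  by (simp add: add.commute)

lemma int_mod_mult_add: "0 \<le> \<rho> \<Longrightarrow> \<rho> < N \<Longrightarrow> (N * q + \<rho>) mod N = (\<rho> :: int)"
  by (simp add: add.commute)

abbreviation component_beta :: "multiconf \<Rightarrow> nat \<Rightarrow> int set" where
  "component_beta X k \<equiv> beta (snd X k) (fst X k)"

lemma of_bool_mod_eq_div_diff:
  fixes N j x :: int
  assumes "0 < N" "0 \<le> j" "j < N"
  shows "of_bool (x mod N = j) = (x - j) div N - (x - 1 - j) div N"
proof -
  define q where "q = (x - j) div N"
  define \<rho> where "\<rho> = (x - j) mod N"
  have x: "x - j = N * q + \<rho>" and \<rho>: "0 \<le> \<rho>" "\<rho> < N"
    using assms unfolding q_def \<rho>_def by simp_all
  have "x mod N = j \<longleftrightarrow> \<rho> = 0"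
    unfolding \<rho>_def using assms by (metis mod_eq_dvd_iff mod_pos_pos_trivial dvd_eq_mod_eq_0)
  moreover have "(x - 1 - j) div N = (if \<rho> = 0 then q - 1 else q)"
  proof (cases "\<rho> = 0")
    case True
    have "x - 1 - j = N * (q - 1) + (N - 1)" using x True by (simp add: algebra_simps)
    then have "(x - 1 - j) div N = (N * (q - 1) + (N - 1)) div N" by (rule arg_cong)
    also have "\<dots> = q - 1" by (rule int_div_mult_add) (use assms in auto)
    finally show ?thesis using True by simp
  next
    case False
    have "x - 1 - j = N * q + (\<rho> - 1)" using x by (simp add: algebra_simps)
    then have "(x - 1 - j) div N = (N * q + (\<rho> - 1)) div N" by (rule arg_cong)
    also have "\<dots> = q" by (rule int_div_mult_add) (use False \<rho> in auto)
    finally show ?thesis using False by simp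
  qed
  ultimately show ?thesis unfolding q_def by simp
qed

lemma int_count_image_mset_mset_set:
  assumes "finite A"
  shows "int (count (image_mset g (mset_set A)) j) = (\<Sum>x\<in>A. of_bool (g x = j))"
proof -
  have "count (image_mset g (mset_set A)) j = card {x\<in>A. g x = j}"
    using assms by (simp add: count_image_mset Int_commute vimage_def Collect_conj_eq)
  then show ?thesis using assms by (simp add: sum.If_cases Int_def of_bool_def)
qed

lemma nodes_eq_Sigma:
  assumes "\<forall>i\<ge>n. l i = 0"
  shows "nodes l = Sigma {..<n} (\<lambda>i. {1..l i})"
  using assms unfolding nodes_def by (force simp: not_less[symmetric])

lemma finite_nodes: "is_partition l \<Longrightarrow> finite (nodes l)"
  by (metis partition_eventually_zero nodes_eq_Sigma finite_SigmaI finite_lessThan finite_atLeastAtMost)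

lemma psize_eq_card_nodes:
  assumes "is_partition l"
  shows "psize l = card (nodes l)"
proof -
  obtain n where n: "\<forall>i\<ge>n. l i = 0" using partition_eventually_zero[OF assms] .
  have "card (nodes l) = (\<Sum>i<n. l i)" by (simp add: nodes_eq_Sigma[OF n] card_SigmaI)
  also have "\<dots> = psize l" unfolding psize_def
    by (rule sum.mono_neutral_right) (use n in \<open>auto simp: not_less[symmetric]\<close>)
  finally show ?thesis by simp
qed

lemma sum_telescope_int:
  assumes "\<forall>x. d x = F x - F (x - 1)"
  shows "(\<Sum>y\<in>{1..L::nat}. d (h + int y)) = F (h + int L) - (F h :: int)"
proof (induction L)
  case (Suc L)
  have "{1..Suc L} = insert (Suc L) {1..L}" by auto
  then show ?case using Suc assms by simp
qed simp

text \<open>Row \<open>i\<close> of the diagram has contents \<open>s - i, \<dots>, b\<^sub>i\<close> with \<open>b\<^sub>i = beta_seq s l i\<close>,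
  so a sum of discrete derivatives telescopes along each row.\<close>
lemma sum_nodes_telescope:
  assumes "\<forall>i\<ge>n. l i = 0" "\<forall>x. d x = F x - F (x - 1)"
  shows "(\<Sum>p\<in>nodes l. d (s + int (snd p) - int (fst p + 1)))
    = (\<Sum>i<n. F (beta_seq s l i) - (F (s - int (i + 1)) :: int))"
proof -
  have "(\<Sum>i<n. \<Sum>y\<in>{1..l i}. d ((s - int (i + 1)) + int y))
      = (\<Sum>(i, y)\<in>Sigma {..<n} (\<lambda>i. {1..l i}). d ((s - int (i + 1)) + int y))"
    by (rule sum.Sigma) auto
  then have "(\<Sum>p\<in>nodes l. d (s + int (snd p) - int (fst p + 1)))
      = (\<Sum>i<n. \<Sum>y\<in>{1..l i}. d ((s - int (i + 1)) + int y))"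
    unfolding nodes_eq_Sigma[OF assms(1)] by (simp add: case_prod_beta' algebra_simps)
  also have "\<dots> = (\<Sum>i<n. F (beta_seq s l i) - F (s - int (i + 1)))"
  proof (rule sum.cong)
    fix i
    have "(\<Sum>y\<in>{1..l i}. d ((s - int (i + 1)) + int y)) = F ((s - int (i + 1)) + int (l i)) - F (s - int (i + 1))"
      by (rule sum_telescope_int[OF assms(2)])
    also have "(s - int (i + 1)) + int (l i) = beta_seq s l i" unfolding beta_seq_def by simp
    finally show "(\<Sum>y\<in>{1..l i}. d ((s - int (i + 1)) + int y)) = F (beta_seq s l i) - F (s - int (i + 1))" .
  qed simp
  finally show ?thesis .
qed

lemma sum_nodes_diff_relsum:
  assumes "is_partition l" "is_partition l'" "\<forall>x. d x = F x - F (x - 1)"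
  shows "(\<Sum>p\<in>nodes l. d (s + int (snd p) - int (fst p + 1)))
       - (\<Sum>p\<in>nodes l'. d (s + int (snd p) - int (fst p + 1)))
     = relsum F (beta s l) (beta s l')"
proof -
  obtain n1 where n1: "\<forall>i\<ge>n1. l i = 0" using partition_eventually_zero[OF assms(1)] .
  obtain n2 where n2: "\<forall>i\<ge>n2. l' i = 0" using partition_eventually_zero[OF assms(2)] .
  define n where "n = max n1 n2"
  have n: "\<forall>i\<ge>n. l i = 0" "\<forall>i\<ge>n. l' i = 0" using n1 n2 unfolding n_def by auto
  have "relsum F (beta s l) (beta s l') = (\<Sum>i<n. F (beta_seq s l i)) - (\<Sum>i<n. F (beta_seq s l' i))"
    using relsum_beta[OF assms(1,2) n, of "s - int n"] by simp
  then show ?thesis using sum_nodes_telescope[OF n(1) assms(3)] sum_nodes_telescope[OF n(2) assms(3)]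
    by (simp add: sum_subtractf)
qed

lemma psize_diff_relsum:
  assumes "is_partition l" "is_partition l'"
  shows "int (psize l) - int (psize l') = relsum (\<lambda>x. x) (beta s l) (beta s l')"
  using sum_nodes_diff_relsum[OF assms, of "\<lambda>_. 1" "\<lambda>x. x" s] assms
  by (simp add: psize_eq_card_nodes)

lemma int_count_residues:
  assumes "\<forall>k<m. is_partition (fst X k)"
  shows "int (count (residues N m X) j) = (\<Sum>k<m. \<Sum>p\<in>nodes (fst X k).
    of_bool ((snd X k + int (snd p) - int (fst p + 1)) mod int N = j))"
  unfolding residues_def using assms
  by (simp add: count_sum int_count_image_mset_mset_set finite_nodes case_prod_beta')

lemma residue_count_diff_relsum:
  assumes "is_partition l" "is_partition l'" "0 < N" "0 \<le> j" "j < int N"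
  shows "(\<Sum>p\<in>nodes l. of_bool ((s + int (snd p) - int (fst p + 1)) mod int N = j))
       - (\<Sum>p\<in>nodes l'. of_bool ((s + int (snd p) - int (fst p + 1)) mod int N = j))
     = relsum (\<lambda>x. (x - j) div int N) (beta s l) (beta s l')"
  using assms of_bool_mod_eq_div_diff[of "int N" j]
  by (intro sum_nodes_diff_relsum) simp_all

lemma int_count_residues_diff:
  fixes N m :: nat and X Y :: multiconf
  assumes N: "0 < N" and j: "0 \<le> j" "j < int N"
    and part: "\<forall>k<m. is_partition (fst X k) \<and> is_partition (fst Y k)"
    and charges: "\<forall>k<m. snd X k = snd Y k"
  shows "int (count (residues N m X) j) - int (count (residues N m Y) j)
    = (\<Sum>k<m. relsum (\<lambda>x. (x - j) div int N) (component_beta X k) (component_beta Y k))"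
proof -
  have "int (count (residues N m X) j) - int (count (residues N m Y) j)
    = (\<Sum>k<m. (\<Sum>p\<in>nodes (fst X k). of_bool ((snd X k + int (snd p) - int (fst p + 1)) mod int N = j))
            - (\<Sum>p\<in>nodes (fst Y k). of_bool ((snd X k + int (snd p) - int (fst p + 1)) mod int N = j)))"
    using int_count_residues[of m X N j] int_count_residues[of m Y N j] part charges
    by (simp add: sum_subtractf)
  also have "\<dots> = (\<Sum>k<m. relsum (\<lambda>x. (x - j) div int N) (component_beta X k) (component_beta Y k))"
  proof (rule sum.cong)
    fix k assume "k \<in> {..<m}"
    then show "(\<Sum>p\<in>nodes (fst X k). of_bool ((snd X k + int (snd p) - int (fst p + 1)) mod int N = j))
            - (\<Sum>p\<in>nodes (fst Y k). of_bool ((snd X k + int (snd p) - int (fst p + 1)) mod int N = j))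
        = relsum (\<lambda>x. (x - j) div int N) (component_beta X k) (component_beta Y k)"
      using residue_count_diff_relsum[OF _ _ N j, of "fst X k" "fst Y k" "snd X k"] part charges by simp
  qed simp
  finally show ?thesis .
qed

lemma count_residues_eq_0:
  assumes "0 < N" "\<forall>k<m. is_partition (fst X k)" "\<not> (0 \<le> j \<and> j < int N)"
  shows "count (residues N m X) j = 0"
proof -
  have "0 \<le> x mod int N \<and> x mod int N < int N" for x using assms(1) by simp
  then have "x mod int N \<noteq> j" for x using assms(3) by blast
  then have "int (count (residues N m X) j) = 0" using int_count_residues[OF assms(2)] by simp
  then show ?thesis by simp
qed

lemma residues_eq_iff_relsum:
  fixes N m :: nat and X Y :: multiconf
  assumes N: "0 < N" and part: "\<forall>k<m. is_partition (fst X k) \<and> is_partition (fst Y k)"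
    and charges: "\<forall>k<m. snd X k = snd Y k"
  shows "residues N m X = residues N m Y \<longleftrightarrow>
    (\<forall>j. (\<Sum>k<m. relsum (\<lambda>x. (x - j) div int N) (component_beta X k) (component_beta Y k)) = 0)"
proof -
  define S where
    "S j = (\<Sum>k<m. relsum (\<lambda>x. (x - j) div int N) (component_beta X k) (component_beta Y k))" for j
  note count_diff = int_count_residues_diff[OF N _ _ part charges, folded S_def]
  have periodic: "S j = S (j mod int N)" for j unfolding S_def
  proof (rule sum.cong)
    fix k assume "k \<in> {..<m}"
    then have "relsum (\<lambda>_. 1) (component_beta X k) (component_beta Y k) = 0"
      using relsum_one_beta part charges by simp
    then show "relsum (\<lambda>x. (x - j) div int N) (component_beta X k) (component_beta Y k)
        = relsum (\<lambda>x. (x - j mod int N) div int N) (component_beta X k) (component_beta Y k)"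
      using relsum_div_mod[of "int N" _ _ "\<lambda>x. x" j] N by simp
  qed simp
  have "residues N m X = residues N m Y \<longleftrightarrow> (\<forall>j. 0 \<le> j \<and> j < int N \<longrightarrow> S j = 0)"
  proof
    assume "residues N m X = residues N m Y"
    then show "\<forall>j. 0 \<le> j \<and> j < int N \<longrightarrow> S j = 0" using count_diff by force
  next
    assume "\<forall>j. 0 \<le> j \<and> j < int N \<longrightarrow> S j = 0"
    then have "count (residues N m X) j = count (residues N m Y) j" for j
      using count_diff[of j] count_residues_eq_0[OF N, of m _ j] part
      by (cases "0 \<le> j \<and> j < int N") auto
    then show "residues N m X = residues N m Y" by (rule multiset_eqI)
  qed
  also have "\<dots> \<longleftrightarrow> (\<forall>j. S j = 0)"
  proof
    assume "\<forall>j. 0 \<le> j \<and> j < int N \<longrightarrow> S j = 0"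
    moreover have "0 \<le> j mod int N \<and> j mod int N < int N" for j using N by simp
    ultimately show "\<forall>j. S j = 0" using periodic by metis
  qed simp
  finally show ?thesis unfolding S_def .
qed

lemma block_eq_iff_relsum:
  fixes N m :: nat and X Y :: multiconf
  assumes "0 < N" and part: "\<forall>k<m. is_partition (fst X k) \<and> is_partition (fst Y k)"
  shows "block_eq N m X Y \<longleftrightarrow> (\<forall>k<m. snd X k = snd Y k)
     \<and> (\<Sum>k<m. relsum (\<lambda>x. x) (component_beta X k) (component_beta Y k)) = 0
     \<and> (\<forall>j. (\<Sum>k<m. relsum (\<lambda>x. (x - j) div int N) (component_beta X k) (component_beta Y k)) = 0)"
proof (cases "\<forall>k<m. snd X k = snd Y k")
  case charges: True
  have "(\<Sum>k<m. int (psize (fst X k))) - (\<Sum>k<m. int (psize (fst Y k)))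
      = (\<Sum>k<m. relsum (\<lambda>x. x) (component_beta X k) (component_beta Y k))"
    unfolding sum_subtractf[symmetric] using psize_diff_relsum part charges by (intro sum.cong) auto
  then have "(\<Sum>k<m. psize (fst X k)) = (\<Sum>k<m. psize (fst Y k))
      \<longleftrightarrow> (\<Sum>k<m. relsum (\<lambda>x. x) (component_beta X k) (component_beta Y k)) = 0"
    by (simp flip: of_nat_sum) linarith
  then show ?thesis
    unfolding block_eq_def using residues_eq_iff_relsum[OF assms charges] charges by simp
qed (auto simp: block_eq_def)

section \<open>Splitting a beta-set into runners\<close>

text \<open>An injection \<open>p : \<int> \<rightarrow> \<nat> \<times> \<int>\<close> places each bead on a runner \<open>fst (p b)\<close> at
  height \<open>snd (p b)\<close>; \<open>runner p B c\<close> is the set of heights of the beads of \<open>B\<close> on runner \<open>c\<close>.\<close>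
definition runner :: "(int \<Rightarrow> nat \<times> int) \<Rightarrow> int set \<Rightarrow> nat \<Rightarrow> int set" where
  "runner p B c = {y. \<exists>b\<in>B. p b = (c, y)}"

lemma runner_diff:
  assumes "inj p"
  shows "runner p B c - runner p B' c = (\<lambda>b. snd (p b)) ` {b \<in> B - B'. fst (p b) = c}"
proof -
  have "p b = (c, y) \<longleftrightarrow> fst (p b) = c \<and> y = snd (p b)" for b y by auto
  then show ?thesis unfolding runner_def using injD[OF assms] by (auto simp: image_iff) metis+
qed

lemma relsum_runner:
  assumes "inj p" "finite (B - B')" "finite (B' - B)"
  shows "relsum G (runner p B c) (runner p B' c)
    = relsum (\<lambda>b. if fst (p b) = c then G (snd (p b)) else 0) B B'"
proof -
  have inj_snd: "inj_on (\<lambda>b. snd (p b)) {b \<in> X. fst (p b) = c}" for X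
  proof (rule inj_onI)
    fix x y assume "x \<in> {b \<in> X. fst (p b) = c}" "y \<in> {b \<in> X. fst (p b) = c}" "snd (p x) = snd (p y)"
    then have "p x = p y" by (simp add: prod_eq_iff)
    then show "x = y" by (rule injD[OF assms(1)])
  qed
  have "sum G (runner p X c - runner p X' c) = (\<Sum>b\<in>X - X'. if fst (p b) = c then G (snd (p b)) else 0)"
    if "finite (X - X')" for X X'
  proof -
    have "sum G (runner p X c - runner p X' c) = (\<Sum>b\<in>{b \<in> X - X'. fst (p b) = c}. G (snd (p b)))"
      unfolding runner_diff[OF assms(1)] by (rule sum.reindex_cong[OF inj_snd]) simp_all
    also have "\<dots> = (\<Sum>b\<in>X - X'. if fst (p b) = c then G (snd (p b)) else 0)"
      by (rule sum.inter_filter[OF that])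
    finally show ?thesis .
  qed
  then show ?thesis unfolding relsum_def using assms(2,3) by simp
qed

lemma sum_relsum_runners:
  assumes "inj p" "finite (B - B')" "finite (B' - B)" "\<forall>b. fst (p b) < n"
  shows "(\<Sum>c<n. relsum G (runner p B c) (runner p B' c)) = relsum (\<lambda>b. G (snd (p b))) B B'"
proof -
  have "(\<Sum>c<n. relsum G (runner p B c) (runner p B' c))
      = relsum (\<lambda>b. \<Sum>c<n. if fst (p b) = c then G (snd (p b)) else 0) B B'"
    by (simp only: relsum_runner[OF assms(1-3)] relsum_sum)
  also have "(\<lambda>b. \<Sum>c<n. if fst (p b) = c then G (snd (p b)) else 0) = (\<lambda>b. G (snd (p b)))"
    using assms(4) by (auto simp: sum.delta')
  finally show ?thesis .
qed

lemma block_eq_runners_iff: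
  fixes N n :: nat and X Y :: multiconf
  assumes "0 < N" "inj p" "\<forall>b. fst (p b) < n" "finite (B - B')" "finite (B' - B)"
    and X: "\<forall>k<n. is_partition (fst X k) \<and> component_beta X k = runner p B k"
    and Y: "\<forall>k<n. is_partition (fst Y k) \<and> component_beta Y k = runner p B' k"
  shows "block_eq N n X Y \<longleftrightarrow> (\<forall>k<n. relsum (\<lambda>b. of_bool (fst (p b) = k)) B B' = 0)
     \<and> relsum (\<lambda>b. snd (p b)) B B' = 0
     \<and> (\<forall>j. relsum (\<lambda>b. (snd (p b) - j) div int N) B B' = 0)"
proof -
  have sums: "(\<Sum>k<n. relsum G (component_beta X k) (component_beta Y k))
      = relsum (\<lambda>b. G (snd (p b))) B B'" for G
    using sum_relsum_runners[OF assms(2,4,5,3)] X Y by simp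
  have charges: "snd X k - snd Y k = relsum (\<lambda>b. of_bool (fst (p b) = k)) B B'" if "k < n" for k
  proof -
    have "snd X k - snd Y k = relsum (\<lambda>_. 1) (runner p B k) (runner p B' k)"
      using relsum_one_beta[of "fst X k" "fst Y k" "snd X k" "snd Y k"] X Y that by simp
    then show ?thesis by (simp add: relsum_runner[OF assms(2,4,5)] of_bool_def)
  qed
  then have charge_iff: "snd X k = snd Y k \<longleftrightarrow> relsum (\<lambda>b. of_bool (fst (p b) = k)) B B' = 0"
    if "k < n" for k
    using that by (metis eq_iff_diff_eq_0)
  have "\<forall>k<n. is_partition (fst X k) \<and> is_partition (fst Y k)" using X Y by blast
  then have "block_eq N n X Y \<longleftrightarrow> (\<forall>k<n. snd X k = snd Y k)
     \<and> (\<Sum>k<n. relsum (\<lambda>x. x) (component_beta X k) (component_beta Y k)) = 0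
     \<and> (\<forall>j. (\<Sum>k<n. relsum (\<lambda>x. (x - j) div int N) (component_beta X k) (component_beta Y k)) = 0)"
    by (rule block_eq_iff_relsum[OF assms(1)])
  then show ?thesis unfolding sums using charge_iff by simp
qed

section \<open>The abacus map \<open>\<eta>\<close>\<close>

definition abacus_pos :: "nat \<Rightarrow> int \<Rightarrow> nat \<times> int" where
  "abacus_pos e b = (nat (b mod int e), b div int e)"

lemma inj_abacus_pos:
  assumes "0 < e"
  shows "inj (abacus_pos e)"
proof (rule injI)
  fix x y assume "abacus_pos e x = abacus_pos e y"
  then have "x mod int e = y mod int e" "x div int e = y div int e"
    unfolding abacus_pos_def using assms by (auto simp: nat_eq_iff)
  then show "x = y" by (metis div_mult_mod_eq)
qed

lemma runner_abacus_pos: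
  assumes "0 < e" "i < e"
  shows "runner (abacus_pos e) B i = (\<lambda>y. int e * y + int i) -` B"
proof -
  have "abacus_pos e b = (i, y) \<longleftrightarrow> b = int e * y + int i" for b y
  proof
    assume "abacus_pos e b = (i, y)"
    then have "b mod int e = int i" "b div int e = y" unfolding abacus_pos_def using assms by auto
    then show "b = int e * y + int i" by (metis div_mult_mod_eq mult.commute)
  qed (use assms in \<open>simp add: abacus_pos_def int_div_mult_add int_mod_mult_add\<close>)
  then show ?thesis unfolding runner_def by auto
qed

lemma eta_C_eq_runner:
  assumes "0 < e" "i < e"
  shows "eta_C e B i = runner (abacus_pos e) B i"
proof -
  have "y \<in> eta_C e B i \<longleftrightarrow> int e * y + int i \<in> B" for y
  proof
    assume "y \<in> eta_C e B i"
    then obtain b where b: "b \<in> B" "b mod int e = int i" "y = (b - int i) div int e"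
      unfolding eta_C_def by auto
    have bq: "b - int i = b div int e * int e" using b(2) div_mult_mod_eq[of b "int e"] by linarith
    then have "y = b div int e" using b(3) assms(1) by simp
    then have "int e * y + int i = b" using bq by (simp add: mult.commute)
    then show "int e * y + int i \<in> B" using b(1) by simp
  next
    assume "int e * y + int i \<in> B"
    moreover have "(int e * y + int i) mod int e = int i" using assms by (simp add: int_mod_mult_add)
    moreover have "y = ((int e * y + int i) - int i) div int e" using assms by simp
    ultimately show "y \<in> eta_C e B i" unfolding eta_C_def by blast
  qed
  then show ?thesis unfolding runner_abacus_pos[OF assms] by auto
qed

lemma eta_components:
  assumes "0 < e" "is_partition l" "i < e"
  shows "is_partition (fst (eta e (l, s)) i)
    \<and> component_beta (eta e (l, s)) i = runner (abacus_pos e) (beta s l) i"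
proof -
  have "strict_mono (\<lambda>y. int e * y + int i)" using assms(1) by (intro strict_monoI) simp
  then have "is_betaset (runner (abacus_pos e) (beta s l) i)"
    unfolding runner_abacus_pos[OF assms(1,3)] by (intro is_betaset_vimage is_betaset_beta assms(2))
  then show ?thesis
    using decode_betaset assms(3) unfolding eta_def by (simp add: eta_C_eq_runner[OF assms(1,3)])
qed

section \<open>Uglov's map \<open>\<Phi>\<^sub>r\<close>\<close>

lemma finite_ball_ex_le:
  fixes P :: "'a \<Rightarrow> int \<Rightarrow> bool"
  assumes "finite K" "\<forall>k\<in>K. \<exists>a. \<forall>y\<le>a. P k y"
  shows "\<exists>a. \<forall>k\<in>K. \<forall>y\<le>a. P k y"
  using assms
proof (induction K rule: finite_induct)
  case (insert k K)
  then obtain a a' where "\<forall>k\<in>K. \<forall>y\<le>a. P k y" "\<forall>y\<le>a'. P k y" by auto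
  then show ?case by (intro exI[of _ "min a a'"]) auto
qed simp

lemma finite_ball_ex_ge:
  fixes P :: "'a \<Rightarrow> int \<Rightarrow> bool"
  assumes "finite K" "\<forall>k\<in>K. \<exists>a. \<forall>y\<ge>a. P k y"
  shows "\<exists>a. \<forall>k\<in>K. \<forall>y\<ge>a. P k y"
  using assms
proof (induction K rule: finite_induct)
  case (insert k K)
  then obtain a a' where "\<forall>k\<in>K. \<forall>y\<ge>a. P k y" "\<forall>y\<ge>a'. P k y" by auto
  then show ?case by (intro exI[of _ "max a a'"]) auto
qed simp

lemma mem_UN_decomp:
  assumes "\<forall>x. h x \<in> K \<and> q (h x) (g x) = x" "\<forall>k\<in>K. \<forall>a. h (q k a) = k \<and> g (q k a) = a"
  shows "x \<in> (\<Union>k\<in>K. q k ` Bs k) \<longleftrightarrow> g x \<in> Bs (h x)"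
proof
  assume "x \<in> (\<Union>k\<in>K. q k ` Bs k)"
  then obtain k a where "k \<in> K" "a \<in> Bs k" "x = q k a" by auto
  then show "g x \<in> Bs (h x)" using assms(2) by simp
next
  assume "g x \<in> Bs (h x)"
  moreover have "h x \<in> K" "x = q (h x) (g x)" using assms(1) by auto
  ultimately show "x \<in> (\<Union>k\<in>K. q k ` Bs k)" by blast
qed

lemma is_betaset_UN_strict_mono:
  fixes q :: "nat \<Rightarrow> int \<Rightarrow> int"
  assumes "finite K" "\<forall>k\<in>K. strict_mono (q k)" "\<forall>k\<in>K. is_betaset (Bs k)"
    and decomp: "\<forall>x. h x \<in> K \<and> q (h x) (g x) = x" "\<forall>k\<in>K. \<forall>a. h (q k a) = k \<and> g (q k a) = a"
  shows "is_betaset (\<Union>k\<in>K. q k ` Bs k)"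
proof -
  have mono: "q k a \<le> q k a'" if "k \<in> K" "a \<le> a'" for k a a'
  proof -
    have "mono (q k)" using assms(2) that(1) strict_mono_mono by blast
    then show ?thesis using that(2) by (rule monoD)
  qed
  obtain L where L: "\<forall>k\<in>K. \<forall>y\<le>L. y \<in> Bs k"
    using finite_ball_ex_le[OF assms(1), of "\<lambda>k y. y \<in> Bs k"] assms(3) unfolding is_betaset_def by blast
  have "\<forall>k\<in>K. \<exists>a. \<forall>x\<le>a. x < q k (L + 1)"
  proof
    fix k show "\<exists>a. \<forall>x\<le>a. x < q k (L + 1)" by (rule exI[of _ "q k (L + 1) - 1"]) auto
  qed
  then obtain A where A: "\<forall>k\<in>K. \<forall>x\<le>A. x < q k (L + 1)" by (rule finite_ball_ex_le[OF assms(1), THEN exE])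
  obtain H where H: "\<forall>k\<in>K. \<forall>y\<ge>H. y \<notin> Bs k"
    using finite_ball_ex_ge[OF assms(1), of "\<lambda>k y. y \<notin> Bs k"] assms(3) unfolding is_betaset_def by blast
  have "\<forall>k\<in>K. \<exists>a. \<forall>x\<ge>a. q k (H - 1) < x"
  proof
    fix k show "\<exists>a. \<forall>x\<ge>a. q k (H - 1) < x" by (rule exI[of _ "q k (H - 1) + 1"]) auto
  qed
  then obtain A' where A': "\<forall>k\<in>K. \<forall>x\<ge>A'. q k (H - 1) < x" by (rule finite_ball_ex_ge[OF assms(1), THEN exE])
  have "g x \<le> L" if "x \<le> A" for x
  proof (rule ccontr)
    assume "\<not> g x \<le> L"
    then have "q (h x) (L + 1) \<le> x" using mono[of "h x" "L + 1" "g x"] decomp(1) by simp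
    moreover have "x < q (h x) (L + 1)" using A that decomp(1) by blast
    ultimately show False by simp
  qed
  moreover have "H \<le> g x" if "A' \<le> x" for x
  proof (rule ccontr)
    assume "\<not> H \<le> g x"
    then have "x \<le> q (h x) (H - 1)" using mono[of "h x" "g x" "H - 1"] decomp(1) by simp
    moreover have "q (h x) (H - 1) < x" using A' that decomp(1) by blast
    ultimately show False by simp
  qed
  ultimately have "\<forall>x\<le>A. g x \<in> Bs (h x)" "\<forall>x\<ge>A'. g x \<notin> Bs (h x)"
    using L H decomp(1) by auto
  then show ?thesis unfolding is_betaset_def mem_UN_decomp[OF decomp] by blast
qed

text \<open>The decomposition inverse to Uglov's \<open>\<psi>\<close>: the bead \<open>b\<close> comes from height
  \<open>uglov_height e r b\<close> on runner \<open>uglov_runner e r b\<close> (counted from \<open>0\<close>).\<close>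
definition uglov_runner :: "nat \<Rightarrow> nat \<Rightarrow> int \<Rightarrow> nat" where
  "uglov_runner e r b = r - 1 - nat (b div int e mod int r)"

definition uglov_height :: "nat \<Rightarrow> nat \<Rightarrow> int \<Rightarrow> int" where
  "uglov_height e r b = b div int e div int r * int e + b mod int e"

definition uglov_pos :: "nat \<Rightarrow> nat \<Rightarrow> int \<Rightarrow> nat \<times> int" where
  "uglov_pos e r b = (uglov_runner e r b, uglov_height e r b)"

lemma uglov_runner_less: "0 < r \<Longrightarrow> uglov_runner e r b < r"
  unfolding uglov_runner_def by simp

lemma uglov_pos_psi:
  assumes "0 < e" "0 < r" "k < r"
  shows "uglov_runner e r (psi e r (Suc k) a) = k" "uglov_height e r (psi e r (Suc k) a) = a"
proof -
  define q where "q = a div int e"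
  define \<rho> where "\<rho> = a mod int e"
  define M where "M = int r * q + int (r - 1 - k)"
  have \<rho>: "0 \<le> \<rho>" "\<rho> < int e" using assms unfolding \<rho>_def by auto
  have "psi e r (Suc k) a = int e * M + \<rho>"
    unfolding psi_def M_def q_def \<rho>_def using assms(3) by (simp add: algebra_simps of_nat_diff)
  then have div_e: "psi e r (Suc k) a div int e = M" and mod_e: "psi e r (Suc k) a mod int e = \<rho>"
    using \<rho> by (simp_all add: int_div_mult_add int_mod_mult_add)
  have "M div int r = q" unfolding M_def by (rule int_div_mult_add) (use assms(3) in auto)
  moreover have "M mod int r = int (r - 1 - k)" unfolding M_def by (rule int_mod_mult_add) (use assms(3) in auto)
  ultimately show "uglov_runner e r (psi e r (Suc k) a) = k" "uglov_height e r (psi e r (Suc k) a) = a"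
    unfolding uglov_runner_def uglov_height_def div_e mod_e q_def \<rho>_def using assms(3) by simp_all
qed

lemma psi_uglov_pos:
  assumes "0 < e" "0 < r"
  shows "psi e r (Suc (uglov_runner e r b)) (uglov_height e r b) = b"
proof -
  define q where "q = b div int e"
  define u where "u = q div int r"
  define v where "v = q mod int r"
  have v: "0 \<le> v" "v < int r" using assms unfolding v_def by auto
  have "uglov_height e r b = int e * u + b mod int e"
    unfolding uglov_height_def u_def q_def by (simp add: mult.commute)
  then have "uglov_height e r b div int e = u" "uglov_height e r b mod int e = b mod int e"
    using assms(1) by (simp_all add: int_div_mult_add int_mod_mult_add)
  moreover have "int (Suc (uglov_runner e r b)) = int r - v"
    unfolding uglov_runner_def v_def[symmetric] q_def[symmetric] using v by linarith
  ultimately have "psi e r (Suc (uglov_runner e r b)) (uglov_height e r b) = ((u + 1) * int r - (int r - v)) * int e + b mod int e"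
    unfolding psi_def by simp
  also have "(u + 1) * int r - (int r - v) = q" unfolding u_def v_def by (simp add: algebra_simps)
  finally show ?thesis unfolding q_def by simp
qed

lemma inj_uglov_pos: "0 < e \<Longrightarrow> 0 < r \<Longrightarrow> inj (uglov_pos e r)"
  by (rule injI) (metis psi_uglov_pos uglov_pos_def prod.inject)

lemma runner_uglov_pos:
  assumes "0 < e" "0 < r" "k < r"
  shows "runner (uglov_pos e r) B k = psi e r (Suc k) -` B"
proof -
  have "uglov_pos e r b = (k, y) \<longleftrightarrow> b = psi e r (Suc k) y" for b y
    using psi_uglov_pos[OF assms(1,2), of b] uglov_pos_psi[OF assms, of y]
    unfolding uglov_pos_def by auto
  then show ?thesis unfolding runner_def by auto
qed

lemma psi_eq_add: "psi e r k a = a + (int r - 1) * int e * (a div int e) + (int r - int k) * int e"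
proof -
  have "a = a div int e * int e + a mod int e" by simp
  then show ?thesis unfolding psi_def by (simp add: algebra_simps)
qed

lemma strict_mono_psi:
  assumes "0 < e" "0 < r"
  shows "strict_mono (psi e r k)"
proof (rule strict_monoI)
  fix a a' :: int assume "a < a'"
  moreover have "(int r - 1) * int e * (a div int e) \<le> (int r - 1) * int e * (a' div int e)"
    using assms \<open>a < a'\<close> by (intro mult_left_mono zdiv_mono1) auto
  ultimately show "psi e r k a < psi e r k a'" unfolding psi_eq_add by simp
qed

lemma psi_decomp:
  assumes "0 < e" "0 < r"
  shows "\<forall>x. Suc (uglov_runner e r x) \<in> {1..r} \<and> psi e r (Suc (uglov_runner e r x)) (uglov_height e r x) = x"
    and "\<forall>k\<in>{1..r}. \<forall>a. Suc (uglov_runner e r (psi e r k a)) = k \<and> uglov_height e r (psi e r k a) = a"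
proof -
  show "\<forall>x. Suc (uglov_runner e r x) \<in> {1..r} \<and> psi e r (Suc (uglov_runner e r x)) (uglov_height e r x) = x"
    using uglov_runner_less[OF assms(2)] psi_uglov_pos[OF assms] by (simp add: Suc_le_eq)
  have "Suc (uglov_runner e r (psi e r k a)) = k \<and> uglov_height e r (psi e r k a) = a"
    if "k \<in> {1..r}" for k a
    using uglov_pos_psi[OF assms, of "k - 1" a] that by (cases k) auto
  then show "\<forall>k\<in>{1..r}. \<forall>a. Suc (uglov_runner e r (psi e r k a)) = k \<and> uglov_height e r (psi e r k a) = a"
    by blast
qed

lemma mem_UN_psi:
  assumes "0 < e" "0 < r"
  shows "x \<in> (\<Union>k\<in>{1..r}. psi e r k ` Bs k) \<longleftrightarrow> uglov_height e r x \<in> Bs (Suc (uglov_runner e r x))"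
  by (rule mem_UN_decomp[OF psi_decomp[OF assms]])

lemma UN_psi_runners:
  assumes "0 < e" "0 < r"
  shows "(\<Union>k\<in>{1..r}. psi e r k ` runner (uglov_pos e r) B (k - 1)) = B"
proof -
  have "x \<in> (\<Union>k\<in>{1..r}. psi e r k ` runner (uglov_pos e r) B (k - 1)) \<longleftrightarrow> x \<in> B" for x
    unfolding mem_UN_psi[OF assms]
    using runner_uglov_pos[OF assms uglov_runner_less[OF assms(2)], of B] psi_uglov_pos[OF assms, of x]
    by simp
  then show ?thesis by blast
qed

lemma runner_UN_psi:
  assumes "0 < e" "0 < r" "k < r"
  shows "runner (uglov_pos e r) (\<Union>j\<in>{1..r}. psi e r j ` Bs j) k = Bs (Suc k)"
proof -
  have "y \<in> psi e r (Suc k) -` (\<Union>j\<in>{1..r}. psi e r j ` Bs j) \<longleftrightarrow> y \<in> Bs (Suc k)" for y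
    using mem_UN_psi[OF assms(1,2), of "psi e r (Suc k) y" Bs] uglov_pos_psi[OF assms, of y] by simp
  then show ?thesis unfolding runner_uglov_pos[OF assms] by blast
qed

lemma is_betaset_UN_psi:
  assumes "0 < e" "0 < r" "\<forall>k\<in>{1..r}. is_betaset (Bs k)"
  shows "is_betaset (\<Union>k\<in>{1..r}. psi e r k ` Bs k)"
  using strict_mono_psi[OF assms(1,2)] assms(3) psi_decomp[OF assms(1,2)]
  by (intro is_betaset_UN_strict_mono) auto

lemma component_beta_eq_runner_if_Psi_eq:
  assumes "0 < e" "0 < r" "\<forall>k<r. is_partition (fst X k)" "Psi e r X = (l, s)" "is_partition l"
    and "k < r"
  shows "component_beta X k = runner (uglov_pos e r) (beta s l) k"
proof -
  define U where "U = (\<Union>j\<in>{1..r}. psi e r j ` component_beta X (j - 1))"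
  have "is_betaset U" unfolding U_def
    using assms(3) by (intro is_betaset_UN_psi[OF assms(1,2)]) (auto intro!: is_betaset_beta)
  moreover have "decode U = (l, s)" using assms(4) unfolding Psi_def U_def by simp
  ultimately have "U = beta s l" using decode_betaset[of U] by simp
  moreover have "runner (uglov_pos e r) U k = component_beta X k"
    unfolding U_def using runner_UN_psi[OF assms(1,2,6), of "\<lambda>j. component_beta X (j - 1)"] by simp
  ultimately show ?thesis by simp
qed

lemma Phi_components:
  assumes "0 < e" "0 < r" "is_partition l" "k < r"
  shows "is_partition (fst (Phi e r (l, s)) k)
    \<and> component_beta (Phi e r (l, s)) k = runner (uglov_pos e r) (beta s l) k"
proof -
  define B where "B = beta s l"
  define X0 :: multiconf where
    "X0 = (\<lambda>k. if k < r then fst (decode (runner (uglov_pos e r) B k)) else (\<lambda>_. 0),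
           \<lambda>k. if k < r then snd (decode (runner (uglov_pos e r) B k)) else 0)"
  have X0: "is_partition (fst X0 k) \<and> component_beta X0 k = runner (uglov_pos e r) B k"
    if "k < r" for k
  proof -
    have "strict_mono (psi e r (Suc k))" by (rule strict_mono_psi[OF assms(1,2)])
    then have "is_betaset (runner (uglov_pos e r) B k)"
      unfolding runner_uglov_pos[OF assms(1,2) that] B_def
      by (intro is_betaset_vimage is_betaset_beta assms(3))
    then show ?thesis using decode_betaset that unfolding X0_def by simp
  qed
  let ?Phi_spec = "\<lambda>X. (\<forall>k<r. is_partition (fst X k))
    \<and> (\<forall>k\<ge>r. fst X k = (\<lambda>_. 0) \<and> snd X k = 0) \<and> Psi e r X = (l, s)"
  have "?Phi_spec X0"
  proof -
    have "(\<Union>k\<in>{1..r}. psi e r k ` component_beta X0 (k - 1))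
        = (\<Union>k\<in>{1..r}. psi e r k ` runner (uglov_pos e r) B (k - 1))"
      using X0 by (intro SUP_cong) auto
    then have "Psi e r X0 = (l, s)"
      unfolding Psi_def UN_psi_runners[OF assms(1,2)] B_def using decode_beta[OF assms(3)] by simp
    then show ?thesis using X0 unfolding X0_def by simp
  qed
  moreover have "X = X0" if "?Phi_spec X" for X
  proof -
    have "fst X k = fst X0 k \<and> snd X k = snd X0 k" for k
      using that component_beta_eq_runner_if_Psi_eq[OF assms(1,2), of X l s k, folded B_def]
        decode_beta[of "fst X k" "snd X k"] assms(3)
      unfolding X0_def by (cases "k < r") auto
    then show ?thesis by (simp add: prod_eq_iff fun_eq_iff)
  qed
  ultimately have "Phi e r (l, s) = X0" unfolding Phi_def by (rule the_equality)
  then show ?thesis using X0[OF assms(4)] unfolding B_def by simp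
qed

section \<open>Comparing the two block conditions\<close>

lemma uglov_height_eq: "uglov_height e r b = int e * (b div int e div int r) + b - int e * (b div int e)"
  unfolding uglov_height_def by (simp add: minus_mult_div_eq_mod[symmetric] algebra_simps)

lemma uglov_height_minus_div:
  assumes "0 < e"
  shows "(uglov_height e r b - j) div int e = b div int e div int r + (b - j) div int e - b div int e"
proof -
  have split: "(a * int e + (b mod int e - j)) div int e = a + (b mod int e - j) div int e" for a
    by (rule div_mult_self3) (use assms in simp)
  have "uglov_height e r b - j = b div int e div int r * int e + (b mod int e - j)"
    unfolding uglov_height_def by simp
  then have "(uglov_height e r b - j) div int e = b div int e div int r + (b mod int e - j) div int e"
    unfolding split[symmetric] by (rule arg_cong)
  moreover have "b - j = b div int e * int e + (b mod int e - j)"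
    by (simp add: algebra_simps minus_mod_eq_div_mult[symmetric])
  then have "(b - j) div int e = b div int e + (b mod int e - j) div int e"
    unfolding split[symmetric] by (rule arg_cong)
  ultimately show ?thesis by simp
qed

lemma of_bool_uglov_runner_eq:
  assumes "0 < r" "k < r"
  shows "of_bool (uglov_runner e r b = k)
    = (b div int e - int (r - 1 - k)) div int r - (b div int e - 1 - int (r - 1 - k)) div int r"
proof -
  have "0 \<le> b div int e mod int r" "b div int e mod int r < int r" using assms by simp_all
  then have "uglov_runner e r b = k \<longleftrightarrow> b div int e mod int r = int (r - 1 - k)"
    unfolding uglov_runner_def using assms by linarith
  then show ?thesis using of_bool_mod_eq_div_diff[of "int r" "int (r - 1 - k)" "b div int e"] assms by simp
qed

lemma relsum_uglov_runner:
  assumes "0 < r" "k < r"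
  shows "relsum (\<lambda>b. of_bool (uglov_runner e r b = k)) B B'
    = relsum (\<lambda>b. (b div int e - int (r - 1 - k)) div int r) B B'
      - relsum (\<lambda>b. (b div int e - (int (r - 1 - k) + 1)) div int r) B B'"
proof -
  have "relsum (\<lambda>b. of_bool (uglov_runner e r b = k)) B B' = relsum (\<lambda>b.
      (b div int e - int (r - 1 - k)) div int r - (b div int e - 1 - int (r - 1 - k)) div int r) B B'"
    by (rule relsum_cong) (rule of_bool_uglov_runner_eq[OF assms])
  then show ?thesis unfolding relsum_diff by (simp add: algebra_simps)
qed

lemma relsum_uglov_height:
  assumes "relsum (\<lambda>x. x) B B' = 0" "relsum (\<lambda>b. b div int e) B B' = 0"
  shows "relsum (uglov_height e r) B B' = int e * relsum (\<lambda>b. b div int e div int r) B B'"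
proof -
  have "relsum (uglov_height e r) B B'
      = relsum (\<lambda>b. int e * (b div int e div int r) + b - int e * (b div int e)) B B'"
    by (rule relsum_cong) (rule uglov_height_eq)
  also have "\<dots> = int e * relsum (\<lambda>b. b div int e div int r) B B' + relsum (\<lambda>b. b) B B'
      - int e * relsum (\<lambda>b. b div int e) B B'"
    by (simp only: relsum_diff relsum_add relsum_cmult)
  finally show ?thesis using assms by simp
qed

lemma relsum_uglov_height_minus_div:
  assumes "0 < e" "\<forall>j. relsum (\<lambda>x. (x - j) div int e) B B' = 0"
  shows "relsum (\<lambda>b. (uglov_height e r b - j) div int e) B B' = relsum (\<lambda>b. b div int e div int r) B B'"
  unfolding uglov_height_minus_div[OF assms(1)]
  using assms(2) assms(2)[rule_format, of 0] by (simp add: relsum_add relsum_diff)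

text \<open>With \<open>G j\<close> the balance of \<open>\<lfloor>(\<lfloor>b/e\<rfloor> - j)/r\<rfloor>\<close>, the runner balances of
  \<open>\<Phi>\<^sub>r\<close> are the differences \<open>G j - G (j + 1)\<close> and its height balances are
  multiples of \<open>G 0\<close>; since \<open>G\<close> is \<open>r\<close>-periodic, both families vanish iff \<open>G\<close> does.\<close>
lemma uglov_balances_iff:
  fixes B B' :: "int set" and e r :: nat
  assumes "0 < e" "0 < r"
    and one: "relsum (\<lambda>_. 1) B B' = 0" and ident: "relsum (\<lambda>x. x) B B' = 0"
    and div_e: "\<forall>j. relsum (\<lambda>x. (x - j) div int e) B B' = 0"
  shows "(\<forall>j. relsum (\<lambda>b. (b div int e - j) div int r) B B' = 0) \<longleftrightarrow>
    (\<forall>k<r. relsum (\<lambda>b. of_bool (uglov_runner e r b = k)) B B' = 0)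
    \<and> relsum (uglov_height e r) B B' = 0
    \<and> (\<forall>j. relsum (\<lambda>b. (uglov_height e r b - j) div int e) B B' = 0)"
proof -
  define G where "G j = relsum (\<lambda>b. (b div int e - j) div int r) B B'" for j
  have quotient: "relsum (\<lambda>b. b div int e) B B' = 0" using div_e[rule_format, of 0] by simp
  have runner: "relsum (\<lambda>b. of_bool (uglov_runner e r b = k)) B B'
      = G (int (r - 1 - k)) - G (int (r - 1 - k) + 1)" if "k < r" for k
    unfolding G_def by (rule relsum_uglov_runner[OF assms(2) that])
  have height: "relsum (uglov_height e r) B B' = int e * G 0"
    using relsum_uglov_height[OF ident quotient] unfolding G_def by simp
  have height_div: "relsum (\<lambda>b. (uglov_height e r b - j) div int e) B B' = G 0" for j
    using relsum_uglov_height_minus_div[OF assms(1) div_e] unfolding G_def by simp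
  have periodic: "G j = G (j mod int r)" for j
    unfolding G_def using relsum_div_mod[OF _ one, of "int r" "\<lambda>b. b div int e" j] assms(2) by simp
  show ?thesis
  proof
    assume "\<forall>j. relsum (\<lambda>b. (b div int e - j) div int r) B B' = 0"
    then have "G j = 0" for j unfolding G_def by blast
    then show "(\<forall>k<r. relsum (\<lambda>b. of_bool (uglov_runner e r b = k)) B B' = 0)
      \<and> relsum (uglov_height e r) B B' = 0
      \<and> (\<forall>j. relsum (\<lambda>b. (uglov_height e r b - j) div int e) B B' = 0)"
      using runner height height_div by simp
  next
    assume balances: "(\<forall>k<r. relsum (\<lambda>b. of_bool (uglov_runner e r b = k)) B B' = 0)
      \<and> relsum (uglov_height e r) B B' = 0
      \<and> (\<forall>j. relsum (\<lambda>b. (uglov_height e r b - j) div int e) B B' = 0)"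
    have "G (int n) = 0" if "n < r" for n
      using that
    proof (induction n)
      case 0
      have "relsum (\<lambda>b. (uglov_height e r b - 0) div int e) B B' = 0" using balances by blast
      then show ?case using height_div[of 0] by simp
    next
      case (Suc n)
      have "r - 1 - (r - 1 - n) = n" "r - 1 - n < r" using Suc.prems by auto
      then have "G (int n) - G (int n + 1) = 0" using runner[of "r - 1 - n"] balances by simp
      then show ?case using Suc by (simp add: add.commute)
    qed
    moreover have "j mod int r = int (nat (j mod int r))" "nat (j mod int r) < r" for j
      using assms(2) by (simp_all add: nat_less_iff)
    ultimately have "G j = 0" for j using periodic[of j] by (metis (no_types))
    then show "\<forall>j. relsum (\<lambda>b. (b div int e - j) div int r) B B' = 0" unfolding G_def by blast
  qed
qed

lemma sim_e_balances:
  assumes "0 < e" "is_partition l" "is_partition m" "sim_e e l m"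
  shows "relsum (\<lambda>x. x) (beta s l) (beta s m) = 0"
    and "\<forall>j. relsum (\<lambda>x. (x - j) div int e) (beta s l) (beta s m) = 0"
proof -
  obtain s' where "block_eq e 1 (\<lambda>_. l, \<lambda>_. s') (\<lambda>_. m, \<lambda>_. s')"
    using assms(4) unfolding sim_e_def by blast
  then have balances: "relsum (\<lambda>x. x) (beta s' l) (beta s' m) = 0"
      "\<forall>j. relsum (\<lambda>x. (x - j) div int e) (beta s' l) (beta s' m) = 0"
    using block_eq_iff_relsum[of e 1 "(\<lambda>_. l, \<lambda>_. s')" "(\<lambda>_. m, \<lambda>_. s')"] assms(1-3) by simp_all
  define c where "c = s' - s"
  have translate: "relsum f (beta s' l) (beta s' m) = relsum (\<lambda>x. f (x + c)) (beta s l) (beta s m)" for f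
    unfolding c_def beta_shift[of s' l s] beta_shift[of s' m s] by (rule relsum_translate)
  have one: "relsum (\<lambda>_. 1) (beta s l) (beta s m) = 0" using relsum_one_beta[OF assms(2,3)] by simp
  have "relsum (\<lambda>x. x + c) (beta s l) (beta s m) = 0" using balances(1) unfolding translate .
  then show "relsum (\<lambda>x. x) (beta s l) (beta s m) = 0"
    by (simp only: relsum_add relsum_const[of c] one)
  show "\<forall>j. relsum (\<lambda>x. (x - j) div int e) (beta s l) (beta s m) = 0"
  proof
    fix j
    have "relsum (\<lambda>x. (x + c - (j + c)) div int e) (beta s l) (beta s m) = 0"
      using balances(2) unfolding translate by blast
    then show "relsum (\<lambda>x. (x - j) div int e) (beta s l) (beta s m) = 0" by simp
  qed
qed

lemma eta_block_eq_iff: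
  assumes "0 < e" "0 < r" "is_partition l" "is_partition m"
    and div_e: "\<forall>j. relsum (\<lambda>x. (x - j) div int e) (beta s l) (beta s m) = 0"
  shows "block_eq r e (eta e (l, s)) (eta e (m, s))
    \<longleftrightarrow> (\<forall>j. relsum (\<lambda>b. (b div int e - j) div int r) (beta s l) (beta s m) = 0)"
proof -
  have "block_eq r e (eta e (l, s)) (eta e (m, s))
    \<longleftrightarrow> (\<forall>i<e. relsum (\<lambda>b. of_bool (nat (b mod int e) = i)) (beta s l) (beta s m) = 0)
      \<and> relsum (\<lambda>b. b div int e) (beta s l) (beta s m) = 0
      \<and> (\<forall>j. relsum (\<lambda>b. (b div int e - j) div int r) (beta s l) (beta s m) = 0)"
    using block_eq_runners_iff[OF assms(2) inj_abacus_pos[OF assms(1)] _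
        finite_beta_diff[OF assms(3,4)] finite_beta_diff[OF assms(4,3)]]
      eta_components[OF assms(1,3)] eta_components[OF assms(1,4)] assms(1)
    by (simp add: abacus_pos_def nat_less_iff)
  moreover have "relsum (\<lambda>b. of_bool (nat (b mod int e) = i)) (beta s l) (beta s m) = 0" if "i < e" for i
  proof -
    have "nat (b mod int e) = i \<longleftrightarrow> b mod int e = int i" for b using assms(1) by auto
    then have "of_bool (nat (b mod int e) = i) = (b - int i) div int e - (b - 1 - int i) div int e" for b
      using of_bool_mod_eq_div_diff[of "int e" "int i" b] assms(1) that by simp
    then have "relsum (\<lambda>b. of_bool (nat (b mod int e) = i)) (beta s l) (beta s m)
        = relsum (\<lambda>b. (b - int i) div int e - (b - 1 - int i) div int e) (beta s l) (beta s m)"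
      by (rule relsum_cong)
    also have "\<dots> = 0"
      using div_e[rule_format, of "int i"] div_e[rule_format, of "1 + int i"]
      by (simp add: relsum_diff diff_diff_eq)
    finally show ?thesis .
  qed
  moreover have "relsum (\<lambda>b. b div int e) (beta s l) (beta s m) = 0" using div_e[rule_format, of 0] by simp
  ultimately show ?thesis by simp
qed

lemma Phi_block_eq_iff:
  assumes "0 < e" "0 < r" "is_partition l" "is_partition m"
  shows "block_eq e r (Phi e r (l, s)) (Phi e r (m, s))
    \<longleftrightarrow> (\<forall>k<r. relsum (\<lambda>b. of_bool (uglov_runner e r b = k)) (beta s l) (beta s m) = 0)
      \<and> relsum (uglov_height e r) (beta s l) (beta s m) = 0
      \<and> (\<forall>j. relsum (\<lambda>b. (uglov_height e r b - j) div int e) (beta s l) (beta s m) = 0)"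
  using block_eq_runners_iff[OF assms(1) inj_uglov_pos[OF assms(1,2)] _
      finite_beta_diff[OF assms(3,4)] finite_beta_diff[OF assms(4,3)]]
    Phi_components[OF assms(1,2,3)] Phi_components[OF assms(1,2,4)] uglov_runner_less[OF assms(2)]
  by (simp add: uglov_pos_def)

theorem theorem2p13:
  fixes e r :: nat and l m :: "nat \<Rightarrow> nat" and s :: int
  assumes "e \<ge> 2" and "r \<ge> 2"
    and "is_partition l" and "is_partition m"
    and "sim_e e l m"
  shows "block_eq r e (eta e (l, s)) (eta e (m, s)) \<longleftrightarrow> block_eq e r (Phi e r (l, s)) (Phi e r (m, s))"
proof -
  have e: "0 < e" and r: "0 < r" using assms(1,2) by auto
  note balances = sim_e_balances[OF e assms(3-5), of s]
  have one: "relsum (\<lambda>_. 1) (beta s l) (beta s m) = 0" using relsum_one_beta[OF assms(3,4)] by simp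
  show ?thesis
    using eta_block_eq_iff[OF e r assms(3,4) balances(2)] Phi_block_eq_iff[OF e r assms(3,4)]
      uglov_balances_iff[OF e r one balances] by simp
qed

end
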